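(* There exists $N$ such that the following holds for all $n\ge N$. Let $G$ be a graph with vertex set $\{v_1,\dots,v_n\}$, let $0\le k\le\frac1{20}\sqrt n$, write $G_i=G-v_i$ and $s_t=\sum_{i=1}^{n-k}d_t(G_i)$, and $d_t=d_t(G)$. Let $t$ be an integer with $0\le t\le\frac{2n}{3}-1$ and suppose $d_{t+1}\le\sqrt n$. Define $d_t'=\frac{1}{n-1-t}\bigl(s_t-(t+1)d_{t+1}\bigr)$. Then $d_t\ge d_t'$; moreover, if $d_t\le2\sqrt n$ then $d_t-d_t'<\frac12$ (so $d_t$ is the integer nearest to $d_t'$), and if $d_t>2\sqrt n$ then $d_t'\ge\frac12 d_t>\sqrt n$.
   Context: All graphs are finite, simple and undirected. For a graph $G'$ and integer $t$, $d_t(G')$ is the number of vertices of degree $t$ in $G'$. For $v\in V(G)$, $G-v$ is obtained by deleting $v$ and its incident edges. *)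

theory Defs
  imports Complex_Main
begin

text \<open>A finite simple graph on vertex set V is given by an edge relation E that is
  symmetric and irreflexive on V; only edges inside V are taken into account.\<close>

definition simple_graph_on :: "nat set \<Rightarrow> (nat \<Rightarrow> nat \<Rightarrow> bool) \<Rightarrow> bool" where
  "simple_graph_on V E \<longleftrightarrow> (\<forall>u\<in>V. \<forall>w\<in>V. E u w \<longleftrightarrow> E w u) \<and> (\<forall>u\<in>V. \<not> E u u)"

definition deg :: "nat set \<Rightarrow> (nat \<Rightarrow> nat \<Rightarrow> bool) \<Rightarrow> nat \<Rightarrow> nat" where
  "deg V E v = card {w \<in> V. E v w}"

definition dcount :: "nat set \<Rightarrow> (nat \<Rightarrow> nat \<Rightarrow> bool) \<Rightarrow> nat \<Rightarrow> nat" where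
  "dcount V E t = card {v \<in> V. deg V E v = t}"

definition delete_vertex :: "nat set \<Rightarrow> nat \<Rightarrow> nat set" where
  "delete_vertex V v = V - {v}"

end

theory Submission imports Defs begin

(*
  Deleting v_i lowers the degree of exactly the neighbours of v_i by one, so a vertex v ~= v_i
  has degree t in G - v_i iff it has degree t in G and is not adjacent to v_i, or degree t + 1
  in G and is adjacent to v_i. Counting these pairs (v, v_i) by v gives
  sum_i d_t(G - v_i) = (n - 1 - t) d_t + (t + 1) d_(t+1), and each summand is at most
  d_t + d_(t+1). Dropping k summands therefore makes d_t - d_t' a nonnegative error of at most
  k (d_t + d_(t+1)) / (n - 1 - t) <= (sqrt n / 20) (d_t + sqrt n) / (n / 3), which is below 1/2
  when d_t <= 2 sqrt n and at most d_t / 2 otherwise.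
*)

lemma card_filter_eq_sum: "finite A \<Longrightarrow> card {x \<in> A. P x} = (\<Sum>x\<in>A. if P x then 1 else 0)"
  by (simp add: sum.inter_filter[symmetric])

lemma deg_delete_vertex:
  assumes "finite V" "i \<in> V"
  shows "deg (delete_vertex V i) E v = (if E v i then deg V E v - 1 else deg V E v)"
proof -
  have "{w \<in> delete_vertex V i. E v w} = {w \<in> V. E v w} - {i}"
    unfolding delete_vertex_def by blast
  thus ?thesis
    using assms by (simp add: deg_def card_Diff_singleton_if)
qed

lemma dcount_delete_vertex:
  assumes "finite V" "i \<in> V"
  shows "dcount (delete_vertex V i) E t =
    card {v \<in> V - {i}. if E v i then deg V E v = Suc t else deg V E v = t}"
proof -
  have "deg V E v \<noteq> 0" if "E v i" for v
    using assms that by (simp add: deg_def card_gt_0_iff[symmetric]) blast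
  hence "(deg (delete_vertex V i) E v = t) = (if E v i then deg V E v = Suc t else deg V E v = t)"
    for v
    using deg_delete_vertex[OF assms] by auto
  thus ?thesis
    unfolding dcount_def by (simp add: delete_vertex_def)
qed

lemma dcount_delete_vertex_le:
  assumes "finite V" "i \<in> V"
  shows "dcount (delete_vertex V i) E t \<le> dcount V E t + dcount V E (Suc t)"
proof -
  have "dcount (delete_vertex V i) E t
      \<le> card ({v \<in> V. deg V E v = t} \<union> {v \<in> V. deg V E v = Suc t})"
    unfolding dcount_delete_vertex[OF assms] using assms
    by (intro card_mono) (auto split: if_splits)
  also have "\<dots> \<le> dcount V E t + dcount V E (Suc t)"
    unfolding dcount_def by (rule card_Un_le)
  finally show ?thesis .
qed

lemma card_deletions_keeping_degree:
  assumes "finite V" "\<forall>u\<in>V. \<not> E u u" "v \<in> V"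
  shows "card {i \<in> V - {v}. if E v i then deg V E v = Suc t else deg V E v = t} =
    (if deg V E v = t then card V - 1 - t else 0) + (if deg V E v = Suc t then Suc t else 0)"
proof -
  have nbrs: "{w \<in> V. E v w} \<subseteq> V - {v}"
    using assms by auto
  consider "deg V E v = t" | "deg V E v = Suc t" | "deg V E v \<noteq> t" "deg V E v \<noteq> Suc t"
    by blast
  thus ?thesis
  proof cases
    case 1
    hence "{i \<in> V - {v}. if E v i then deg V E v = Suc t else deg V E v = t} =
        (V - {v}) - {w \<in> V. E v w}"
      by auto
    thus ?thesis
      using 1 assms card_Diff_subset[OF finite_subset[OF nbrs] nbrs] by (simp add: deg_def)
  next
    case 2
    hence "{i \<in> V - {v}. if E v i then deg V E v = Suc t else deg V E v = t} = {w \<in> V. E v w}"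
      using nbrs by auto
    thus ?thesis
      using 2 by (simp add: deg_def)
  next
    case 3
    thus ?thesis
      by (simp split: if_splits)
  qed
qed

lemma sum_dcount_delete_vertex:
  assumes "finite V" "\<forall>u\<in>V. \<not> E u u"
  shows "(\<Sum>i\<in>V. dcount (delete_vertex V i) E t) =
    (card V - 1 - t) * dcount V E t + Suc t * dcount V E (Suc t)"
proof -
  define keeps where "keeps v i \<longleftrightarrow> v \<noteq> i \<and> (if E v i then deg V E v = Suc t else deg V E v = t)"
    for v i
  have "(\<Sum>i\<in>V. dcount (delete_vertex V i) E t) = (\<Sum>i\<in>V. \<Sum>v\<in>V. if keeps v i then 1 else 0)"
    using assms by (intro sum.cong)
      (simp_all add: dcount_delete_vertex card_filter_eq_sum[symmetric] keeps_def conj_commute)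
  also have "\<dots> = (\<Sum>v\<in>V. \<Sum>i\<in>V. if keeps v i then 1 else 0)"
    by (rule sum.swap)
  also have "\<dots> = (\<Sum>v\<in>V. (if deg V E v = t then card V - 1 - t else 0) +
                            (if deg V E v = Suc t then Suc t else 0))"
    using assms
    by (intro sum.cong refl)
      (simp add: card_deletions_keeping_degree[symmetric] card_filter_eq_sum[symmetric] keeps_def;
       intro arg_cong[where f = card]; auto)
  also have "\<dots> = (card V - 1 - t) * dcount V E t + Suc t * dcount V E (Suc t)"
    unfolding sum.distrib dcount_def using assms by (simp add: sum.inter_filter[symmetric])
  finally show ?thesis .
qed

lemma dcount_estimate_error:
  assumes "finite V" "\<forall>u\<in>V. \<not> E u u" "W \<subseteq> V" "Suc t < card V"
  defines "D \<equiv> real (card V) - 1 - real t"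
    and "d' \<equiv> (real (\<Sum>i\<in>W. dcount (delete_vertex V i) E t)
                - real (Suc t) * real (dcount V E (Suc t))) / (real (card V) - 1 - real t)"
  shows "d' \<le> real (dcount V E t)"
    and "(real (dcount V E t) - d') * D
           \<le> real (card (V - W)) * (real (dcount V E t) + real (dcount V E (Suc t)))"
proof -
  define S where "S = (\<Sum>i\<in>W. dcount (delete_vertex V i) E t)"
  define R where "R = (\<Sum>i\<in>V - W. dcount (delete_vertex V i) E t)"
  have "S + R = (card V - 1 - t) * dcount V E t + Suc t * dcount V E (Suc t)"
    using sum.subset_diff[OF assms(3,1)] sum_dcount_delete_vertex[of V E t, OF assms(1,2)]
    unfolding S_def R_def by (metis add.commute)
  moreover have "real (card V - 1 - t) = D"
    unfolding D_def using assms(4) by simp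
  ultimately have total:
    "real S + real R = D * real (dcount V E t) + real (Suc t) * real (dcount V E (Suc t))"
    by (metis of_nat_add of_nat_mult)
  have "R \<le> card (V - W) * (dcount V E t + dcount V E (Suc t))"
    unfolding R_def using dcount_delete_vertex_le[OF assms(1)]
      sum_bounded_above[of "V - W" "\<lambda>i. dcount (delete_vertex V i) E t"]
    by simp
  hence R_le: "real R \<le> real (card (V - W)) * (real (dcount V E t) + real (dcount V E (Suc t)))"
    by (simp flip: of_nat_add of_nat_mult)
  have "D > 0"
    unfolding D_def using assms(4) by linarith
  hence error: "real (dcount V E t) - d' = real R / D"
    unfolding d'_def D_def[symmetric] S_def[symmetric] using total by (simp add: field_simps)
  have "0 \<le> real R / D"
    using \<open>D > 0\<close> by simp
  thus "d' \<le> real (dcount V E t)"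
    using error by linarith
  show "(real (dcount V E t) - d') * D
           \<le> real (card (V - W)) * (real (dcount V E t) + real (dcount V E (Suc t)))"
    using error \<open>D > 0\<close> R_le by simp
qed

lemma estimate_error_lt_half:
  fixes x k d d1 e D :: real
  assumes "0 \<le> k" "k \<le> x / 20" "0 \<le> d1" "d1 \<le> x" "0 \<le> d" "d \<le> 2 * x"
    and "e * D \<le> k * (d + d1)" "x\<^sup>2 \<le> 3 * D" "D > 0"
  shows "e < 1 / 2"
proof -
  have "k * (d + d1) \<le> (x / 20) * (3 * x)"
    using assms by (intro mult_mono) auto
  also have "\<dots> = 3 * x\<^sup>2 / 20"
    by (simp add: power2_eq_square)
  finally have "e * D \<le> 9 / 20 * D"
    using assms by linarith
  hence "e \<le> 9 / 20"
    using \<open>D > 0\<close> by (rule mult_right_le_imp_le)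
  thus ?thesis
    by linarith
qed

lemma estimate_error_le_half:
  fixes x k d d1 e D :: real
  assumes "1 \<le> x" "0 \<le> k" "k \<le> x / 20" "0 \<le> d1" "d1 \<le> x" "2 * x < d"
    and "e * D \<le> k * (d + d1)" "x\<^sup>2 \<le> 3 * D" "D > 0"
  shows "e \<le> d / 2"
proof -
  have "d + d1 \<le> 3 / 2 * d"
    using assms by linarith
  moreover have "x \<le> x\<^sup>2"
    using mult_left_mono[of 1 x x] assms by (simp add: power2_eq_square)
  ultimately have "k * (d + d1) \<le> (x\<^sup>2 / 20) * (3 / 2 * d)"
    using assms by (intro mult_mono) auto
  also have "\<dots> \<le> (3 * D / 20) * (3 / 2 * d)"
    using assms by (intro mult_right_mono) auto
  also have "\<dots> \<le> d / 2 * D"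
    using assms by simp
  finally have "e * D \<le> d / 2 * D"
    using assms by linarith
  thus ?thesis
    using \<open>D > 0\<close> by (rule mult_right_le_imp_le)
qed

theorem mainTheorem7:
  shows "\<exists>N::nat. \<forall>n\<ge>N. \<forall>(E :: nat \<Rightarrow> nat \<Rightarrow> bool) (k::nat) (t::nat).
    simple_graph_on {1..n} E \<longrightarrow>
    real k \<le> sqrt (real n) / 20 \<longrightarrow>
    real t \<le> 2 * real n / 3 - 1 \<longrightarrow>
    real (dcount {1..n} E (t + 1)) \<le> sqrt (real n) \<longrightarrow>
    (let s = (\<Sum>i = 1..n - k. dcount (delete_vertex {1..n} i) E t);
         d = real (dcount {1..n} E t);
         d' = (real s - real (t + 1) * real (dcount {1..n} E (t + 1))) / (real n - 1 - real t)
     in d \<ge> d' \<and>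
        (d \<le> 2 * sqrt (real n) \<longrightarrow> d - d' < 1 / 2) \<and>
        (d > 2 * sqrt (real n) \<longrightarrow> d' \<ge> d / 2 \<and> d / 2 > sqrt (real n)))"
    (is "\<exists>N. \<forall>n\<ge>N. \<forall>E k t. _ \<longrightarrow> _ \<longrightarrow> _ \<longrightarrow> _ \<longrightarrow> ?claim n E k t")
proof (intro exI[of _ 0] allI impI)
  fix n :: nat and E :: "nat \<Rightarrow> nat \<Rightarrow> bool" and k t :: nat
  assume graph: "simple_graph_on {1..n} E" and k_le: "real k \<le> sqrt (real n) / 20"
    and t_le: "real t \<le> 2 * real n / 3 - 1"
    and d1_le: "real (dcount {1..n} E (t + 1)) \<le> sqrt (real n)"
  define d' where "d' = (real (\<Sum>i = 1..n - k. dcount (delete_vertex {1..n} i) E t)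
      - real (t + 1) * real (dcount {1..n} E (t + 1))) / (real n - 1 - real t)"
  have irreflexive: "\<forall>u\<in>{1..n}. \<not> E u u"
    using graph unfolding simple_graph_on_def by blast
  have dropped: "card ({1..n} - {1..n - k}) \<le> k"
    using card_mono[of "{n - k<..n}" "{1..n} - {1..n - k}"] by force
  have "Suc t < card {1..n}"
    using t_le by simp
  hence "d' \<le> real (dcount {1..n} E t)" and
    "(real (dcount {1..n} E t) - d') * (real n - 1 - real t)
      \<le> real (card ({1..n} - {1..n - k}))
          * (real (dcount {1..n} E t) + real (dcount {1..n} E (t + 1)))"
    using dcount_estimate_error[of "{1..n}" E "{1..n - k}" t] irreflexive unfolding d'_def
    by simp_all
  moreover have error: "(real (dcount {1..n} E t) - d') * (real n - 1 - real t)
      \<le> real k * (real (dcount {1..n} E t) + real (dcount {1..n} E (t + 1)))"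
    using order_trans[OF calculation(2) mult_right_mono[OF of_nat_mono[OF dropped]]] by simp
  moreover have "1 \<le> sqrt (real n)" "(sqrt (real n))\<^sup>2 \<le> 3 * (real n - 1 - real t)"
    "0 < real n - 1 - real t"
    using t_le by simp_all
  ultimately show "?claim n E k t"
    unfolding Let_def d'_def[symmetric]
    using estimate_error_lt_half[OF _ k_le _ d1_le _ _ error]
      estimate_error_le_half[OF _ _ k_le _ d1_le _ error]
    by auto
qed

end
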